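(* Let $X\subset \operatorname{int}(S^1\times[-1,1])$ be an annular continuum, and let $V$ and hairs be as defined in the context. Assume that there exists a sequence $\{\gamma_n\}_{n\ge1}$ of hairs of $V$ with $\min(\gamma_n)_1 \to -\infty$, and that for every sequence $\{\gamma_n\}_{n\ge 1}$ of hairs of $V$ with $\min(\gamma_n)_1\to-\infty$ one has $\max(\gamma_n)_1\to+\infty$. Then for every $R>1$ there exists $L'<0$ such that whenever $\gamma$ is a hair of $V+k$ for some integer $k\ge 0$ and $(\gamma(1))_1\le L'$, we have $R\in(\gamma)_1$.
   Context: $\pi\colon\mathbb{R}\times[-1,1]\to S^1\times[-1,1]$ is the universal cover, with deck transformation $T(x,y)=(x+1,y)$; for a set $S$ and $k\in\mathbb{Z}$, $S+k$ denotes $T^k(S)$. For a point or set $S$, $(S)_1$ denotes its image under the first-coordinate projection. An annular continuum $X\subset\operatorname{int}(S^1\times[-1,1])$ is a continuum whose complement consists of exactly two components, $U_-\supset S^1\times\{-1\}$ and $U_+\supset S^1\times\{1\}$. Let $\tilde X=\pi^{-1}(X)$, $\tilde U_+=\pi^{-1}(U_+)$. Let $\eta=\max\{y:(0,y)\in\tilde X\}$, $x_0=(0,\eta)$, $\beta$ the vertical segment from $(0,1)$ to $x_0$, and $\beta'=\beta\setminus\{x_0\}$. The arcs $\beta'$ and $\beta'+1$ bound a region in $\tilde U_+$ containing $(0,1)\times\{1\}$; $V$ is the closure of this region relative to $\tilde U_+$. A hair of $V$ is an arc $\gamma\colon[0,1]\to V$ with $\gamma(0)\in\mathbb{R}\times\{1\}$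 (identified with its image). An arc $\gamma$ is a hair of $V+k$ if $\gamma-k$ is a hair of $V$. (The paper phrases the hypothesis on $\gamma$ as "$\gamma$ is a hair contained in $V^+=\bigcup_{j\ge 0}(V+j)$".) *)

theory Defs
  imports "HOL-Analysis.Analysis"
begin

text \<open>The circle S^1 is modelled as the unit circle in the complex plane; the closed
annulus is S^1 x [-1,1]; the universal cover is the plane region R x [-1,1],
with covering map (x,y) |-> (exp(2 pi i x), y).\<close>

definition S1 :: "complex set" where
  "S1 = sphere 0 1"

definition Ann :: "(complex \<times> real) set" where
  "Ann = S1 \<times> {-1..1}"

definition int_Ann :: "(complex \<times> real) set" where
  "int_Ann = S1 \<times> {-1<..<1}"

definition cover :: "real \<times> real \<Rightarrow> complex \<times> real" where
  "cover p = (cis (2 * pi * fst p), snd p)"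

definition annular_continuum :: "(complex \<times> real) set \<Rightarrow> bool" where
  "annular_continuum X \<longleftrightarrow> X \<subseteq> int_Ann \<and> X \<noteq> {} \<and> compact X \<and> connected X \<and>
     (\<exists>Um Up. components (Ann - X) = {Um, Up} \<and> Um \<noteq> Up \<and>
        S1 \<times> {-1} \<subseteq> Um \<and> S1 \<times> {1} \<subseteq> Up)"

definition U_plus :: "(complex \<times> real) set \<Rightarrow> (complex \<times> real) set" where
  "U_plus X = connected_component_set (Ann - X) (1, 1)"

definition lift_X :: "(complex \<times> real) set \<Rightarrow> (real \<times> real) set" where
  "lift_X X = {p. snd p \<in> {-1..1} \<and> cover p \<in> X}"

definition lift_U_plus :: "(complex \<times> real) set \<Rightarrow> (real \<times> real) set" where
  "lift_U_plus X = {p. snd p \<in> {-1..1} \<and> cover p \<in> U_plus X}"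

definition shift :: "int \<Rightarrow> (real \<times> real) set \<Rightarrow> (real \<times> real) set" where
  "shift k S = (\<lambda>p. p + (real_of_int k, 0)) ` S"

definition eta :: "(complex \<times> real) set \<Rightarrow> real" where
  "eta X = Sup {y. (0, y) \<in> lift_X X}"

definition x0 :: "(complex \<times> real) set \<Rightarrow> real \<times> real" where
  "x0 X = (0, eta X)"

text \<open>eta = max of the (compact, nonempty) fibre, written as Sup.\<close>

definition beta' :: "(complex \<times> real) set \<Rightarrow> (real \<times> real) set" where
  "beta' X = closed_segment (0, 1) (x0 X) - {x0 X}"

text \<open>The region of lift_U_plus bounded by beta' and beta'+1 containing (0,1) x {1},
i.e. the component of the complement of the two arcs containing (1/2, 1).\<close>
definition V_region :: "(complex \<times> real) set \<Rightarrow> (real \<times> real) set" where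
  "V_region X = connected_component_set (lift_U_plus X - (beta' X \<union> shift 1 (beta' X))) (1/2, 1)"

definition V :: "(complex \<times> real) set \<Rightarrow> (real \<times> real) set" where
  "V X = closure (V_region X) \<inter> lift_U_plus X"

definition hair :: "(real \<times> real) set \<Rightarrow> (real \<Rightarrow> real \<times> real) \<Rightarrow> bool" where
  "hair S \<gamma> \<longleftrightarrow> arc \<gamma> \<and> path_image \<gamma> \<subseteq> S \<and> snd (pathstart \<gamma>) = 1"

definition hair_shift :: "(complex \<times> real) set \<Rightarrow> int \<Rightarrow> (real \<Rightarrow> real \<times> real) \<Rightarrow> bool" where
  "hair_shift X k \<gamma> \<longleftrightarrow> hair (V X) (\<lambda>t. \<gamma> t - (real_of_int k, 0))"

text \<open>min and max of the first coordinate over the (compact) image of a hair, as Inf/Sup.\<close>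
definition min1 :: "(real \<Rightarrow> real \<times> real) \<Rightarrow> real" where
  "min1 \<gamma> = Inf (fst ` path_image \<gamma>)"

definition max1 :: "(real \<Rightarrow> real \<times> real) \<Rightarrow> real" where
  "max1 \<gamma> = Sup (fst ` path_image \<gamma>)"

end

theory Submission
  imports Defs
begin

text \<open>If hairs of V ending arbitrarily far to the left all stayed left of R, their minimal
  first coordinates would tend to -\<infinity> while the maximal ones stayed bounded, contradicting
  the hypothesis. So a hair of V ending far enough left reaches past R. A hair of V+k,
  k \<ge> 0, translated back to V ends even further left and must pass R - k; as the
  first-coordinate projection of an arc is an interval, the hair of V+k passes through R.\<close>

lemma bdd_fst_path_image:
  fixes g :: "real \<Rightarrow> real \<times> real"
  assumes "path g"
  shows "bdd_below (fst ` path_image g)" "bdd_above (fst ` path_image g)"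
proof -
  have "bounded (fst ` path_image g)"
    by (intro compact_imp_bounded compact_continuous_image continuous_intros
        compact_path_image assms)
  then show "bdd_below (fst ` path_image g)" "bdd_above (fst ` path_image g)"
    by (simp_all add: bounded_imp_bdd_below bounded_imp_bdd_above)
qed

lemma min1_le_fst_pathfinish:
  assumes "path g"
  shows "min1 g \<le> fst (pathfinish g)"
  unfolding min1_def
  by (intro cInf_lower bdd_fst_path_image assms) (simp add: pathfinish_in_path_image)

lemma fst_path_image_between:
  assumes "path g" "fst (pathfinish g) \<le> x" "x < max1 g"
  shows "x \<in> fst ` path_image g"
proof -
  obtain b where b: "b \<in> fst ` path_image g" "x < b"
    using assms(3) less_cSup_iff[OF _ bdd_fst_path_image(2)[OF assms(1)]]
    by (auto simp: max1_def path_image_nonempty)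
  have "connected (fst ` path_image g)"
    by (intro connected_continuous_image continuous_intros connected_path_image assms(1))
  then have "{fst (pathfinish g)..b} \<subseteq> fst ` path_image g"
    using b(1) by (intro connected_contains_Icc) (auto simp: pathfinish_in_path_image)
  with assms(2) b(2) show ?thesis by auto
qed

lemma fst_path_image_translate:
  "fst ` path_image (\<lambda>t. g t - (c, 0)) = (\<lambda>x. x - c) ` fst ` path_image g"
  by (auto simp: path_image_def image_image)

lemma filterlim_at_bot_if_le_minus_real:
  fixes f :: "nat \<Rightarrow> real"
  assumes "\<And>n. f n \<le> - real n"
  shows "filterlim f at_bot sequentially"
proof -
  have "filterlim (\<lambda>n. - f n) at_top sequentially"
    using assms by (intro filterlim_at_top_mono[OF filterlim_real_sequentially] always_eventually)
      (simp add: le_minus_iff)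
  then show ?thesis
    by (simp add: filterlim_uminus_at_top)
qed

lemma hairs_ending_far_left_reach_right:
  assumes escape: "\<forall>\<gamma>s :: nat \<Rightarrow> real \<Rightarrow> real \<times> real.
           (\<forall>n. hair S (\<gamma>s n)) \<and> filterlim (\<lambda>n. min1 (\<gamma>s n)) at_bot sequentially
           \<longrightarrow> filterlim (\<lambda>n. max1 (\<gamma>s n)) at_top sequentially"
  shows "\<exists>L. \<forall>\<gamma>. hair S \<gamma> \<and> fst (pathfinish \<gamma>) \<le> L \<longrightarrow> R < max1 \<gamma>"
proof (rule ccontr)
  assume "\<not> ?thesis"
  then have "\<forall>n::nat. \<exists>\<gamma>. hair S \<gamma> \<and> fst (pathfinish \<gamma>) \<le> - real n \<and> max1 \<gamma> \<le> R"
    by (auto simp: not_less)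
  then obtain \<gamma>s where \<gamma>s: "\<And>n. hair S (\<gamma>s n)"
      "\<And>n. fst (pathfinish (\<gamma>s n)) \<le> - real n" "\<And>n. max1 (\<gamma>s n) \<le> R"
    by metis
  have "min1 (\<gamma>s n) \<le> - real n" for n
    using min1_le_fst_pathfinish[of "\<gamma>s n"] \<gamma>s(1,2)[of n]
    by (auto simp: hair_def arc_imp_path)
  then have "filterlim (\<lambda>n. min1 (\<gamma>s n)) at_bot sequentially"
    by (rule filterlim_at_bot_if_le_minus_real)
  with escape \<gamma>s(1) have "filterlim (\<lambda>n. max1 (\<gamma>s n)) at_top sequentially"
    by blast
  then obtain N where "\<And>n. n \<ge> N \<Longrightarrow> R + 1 \<le> max1 (\<gamma>s n)"
    by (auto simp: filterlim_at_top eventually_sequentially)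
  with \<gamma>s(3)[of N] show False
    by fastforce
qed

theorem lemma5:
  fixes X :: "(complex \<times> real) set"
  assumes "annular_continuum X"
    and "\<exists>\<gamma>s :: nat \<Rightarrow> real \<Rightarrow> real \<times> real.
           (\<forall>n. hair (V X) (\<gamma>s n)) \<and> filterlim (\<lambda>n. min1 (\<gamma>s n)) at_bot sequentially"
    and "\<forall>\<gamma>s :: nat \<Rightarrow> real \<Rightarrow> real \<times> real.
           (\<forall>n. hair (V X) (\<gamma>s n)) \<and> filterlim (\<lambda>n. min1 (\<gamma>s n)) at_bot sequentially
           \<longrightarrow> filterlim (\<lambda>n. max1 (\<gamma>s n)) at_top sequentially"
  shows "\<forall>R > 1. \<exists>L' < 0. \<forall>k::int. \<forall>\<gamma>. k \<ge> 0 \<and> hair_shift X k \<gamma> \<and> fst (pathfinish \<gamma>) \<le> L'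
           \<longrightarrow> R \<in> fst ` path_image \<gamma>"
proof (intro allI impI)
  fix R :: real
  assume "R > 1"
  obtain L where L: "\<And>\<gamma>. hair (V X) \<gamma> \<Longrightarrow> fst (pathfinish \<gamma>) \<le> L \<Longrightarrow> R < max1 \<gamma>"
    using hairs_ending_far_left_reach_right[OF assms(3)] by blast
  have "R \<in> fst ` path_image \<gamma>"
    if "k \<ge> 0" "hair_shift X k \<gamma>" "fst (pathfinish \<gamma>) \<le> min L (-1)" for k \<gamma>
  proof -
    define \<delta> where "\<delta> = (\<lambda>t. \<gamma> t - (real_of_int k, 0))"
    have hair: "hair (V X) \<delta>"
      using that(2) by (simp add: hair_shift_def \<delta>_def)
    have finish: "fst (pathfinish \<delta>) = fst (pathfinish \<gamma>) - k"
      by (simp add: \<delta>_def pathfinish_def)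
    have "R - k \<in> fst ` path_image \<delta>"
    proof (rule fst_path_image_between)
      show "path \<delta>" using hair by (simp add: hair_def arc_imp_path)
      show "fst (pathfinish \<delta>) \<le> R - k" using finish that(3) \<open>R > 1\<close> by simp
      show "R - k < max1 \<delta>" using L[OF hair] finish that(1,3) by simp
    qed
    then show ?thesis
      unfolding \<delta>_def fst_path_image_translate by (auto intro: rev_image_eqI)
  qed
  then show "\<exists>L' < 0. \<forall>k::int. \<forall>\<gamma>. k \<ge> 0 \<and> hair_shift X k \<gamma> \<and> fst (pathfinish \<gamma>) \<le> L'
           \<longrightarrow> R \<in> fst ` path_image \<gamma>"
    by (intro exI[of _ "min L (-1)"]) auto
qed

end
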